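(* Let $G$ be a partial cube in which every convex cycle is a $4$-cycle, and let $P=v_0v_1\cdots v_l$ ($l\geqslant 1$) be a path in $G$. If $P$ is of type-I, then $P$ is a shortest $v_0,v_l$-path (geodesic) in $G$.
   Context: A partial cube is a connected graph isomorphic to an isometric subgraph of a hypercube. A subgraph $H$ is convex if for all $u,v\in V(H)$ every shortest $u,v$-path of $G$ lies in $H$; a convex cycle is a cycle that is a convex subgraph. The Djoković–Winkler relation $\Theta$ on edges: $uv\,\Theta\,xy$ iff $d(u,x)+d(v,y)\neq d(u,y)+d(v,x)$; in a partial cube it is an equivalence relation, and $F_e$ denotes the $\Theta$-class of edge $e$. For a vertex $v$, $\mathcal{F}(v)=\{F_e: e \text{ is an edge incident with } v\}$. With $e_i=v_{i-1}v_i$ ($1\leqslant i\leqslant l$), the path $P=v_0v_1\cdots v_l$ ($l\geqslant 1$) is of type-I if $\mathcal{F}(v_0)\setminus\mathcal{F}(v_1)\neq\emptyset$, $\mathcal{F}(v_l)\setminus\mathcal{F}(v_{l-1})\neq\emptyset$, and for every $1\leqslant i\leqslant l-1$: $F_{e_{i+1}}\notin\mathcal{F}(v_{i-1})$ and $F_{e_i}\notin\mathcal{F}(v_{i+1})$. *)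

theory Defs
  imports Main
begin

record 'a graph =
  verts :: "'a set"
  edges :: "'a set set"

definition wf_graph :: "'a graph \<Rightarrow> bool" where
  "wf_graph G \<longleftrightarrow> finite (verts G) \<and>
     (\<forall>e\<in>edges G. \<exists>u v. u \<noteq> v \<and> u \<in> verts G \<and> v \<in> verts G \<and> e = {u, v})"

definition adj :: "'a graph \<Rightarrow> 'a \<Rightarrow> 'a \<Rightarrow> bool" where
  "adj G u v \<longleftrightarrow> u \<noteq> v \<and> {u, v} \<in> edges G"

definition walk :: "'a graph \<Rightarrow> 'a list \<Rightarrow> bool" where
  "walk G xs \<longleftrightarrow> xs \<noteq> [] \<and> set xs \<subseteq> verts G \<and>
     (\<forall>i. Suc i < length xs \<longrightarrow> adj G (xs ! i) (xs ! Suc i))"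

definition gpath :: "'a graph \<Rightarrow> 'a list \<Rightarrow> bool" where
  "gpath G xs \<longleftrightarrow> walk G xs \<and> distinct xs"

definition connected_graph :: "'a graph \<Rightarrow> bool" where
  "connected_graph G \<longleftrightarrow> verts G \<noteq> {} \<and>
     (\<forall>u\<in>verts G. \<forall>v\<in>verts G. \<exists>xs. walk G xs \<and> hd xs = u \<and> last xs = v)"

definition gdist :: "'a graph \<Rightarrow> 'a \<Rightarrow> 'a \<Rightarrow> nat" where
  "gdist G u v = (LEAST n. \<exists>xs. walk G xs \<and> hd xs = u \<and> last xs = v \<and> length xs - 1 = n)"

definition shortest_path :: "'a graph \<Rightarrow> 'a \<Rightarrow> 'a \<Rightarrow> 'a list \<Rightarrow> bool" where
  "shortest_path G u v xs \<longleftrightarrow> gpath G xs \<and> hd xs = u \<and> last xs = v \<and>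
     length xs - 1 = gdist G u v"

definition subgraph :: "'a graph \<Rightarrow> 'a graph \<Rightarrow> bool" where
  "subgraph H G \<longleftrightarrow> wf_graph H \<and> verts H \<subseteq> verts G \<and> edges H \<subseteq> edges G"

definition isometric_subgraph :: "'a graph \<Rightarrow> 'a graph \<Rightarrow> bool" where
  "isometric_subgraph H G \<longleftrightarrow> subgraph H G \<and>
     (\<forall>u\<in>verts H. \<forall>v\<in>verts H. gdist H u v = gdist G u v)"

definition isomorphic :: "'a graph \<Rightarrow> 'b graph \<Rightarrow> bool" where
  "isomorphic G H \<longleftrightarrow> (\<exists>f. bij_betw f (verts G) (verts H) \<and>
     (\<forall>u\<in>verts G. \<forall>v\<in>verts G. adj G u v \<longleftrightarrow> adj H (f u) (f v)))"

text \<open>The hypercube Q_n: vertices are subsets of {0..<n} (i.e. 0/1 vectors),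
  adjacent iff they differ in exactly one coordinate.\<close>
definition hypercube :: "nat \<Rightarrow> nat set graph" where
  "hypercube n = \<lparr> verts = Pow {0..<n},
     edges = {{S, T} | S T. S \<subseteq> {0..<n} \<and> T \<subseteq> {0..<n} \<and> card ((S - T) \<union> (T - S)) = 1} \<rparr>"

definition partial_cube :: "'a graph \<Rightarrow> bool" where
  "partial_cube G \<longleftrightarrow> wf_graph G \<and> connected_graph G \<and>
     (\<exists>n H. isometric_subgraph H (hypercube n) \<and> isomorphic G H)"

definition convex_subgraph :: "'a graph \<Rightarrow> 'a graph \<Rightarrow> bool" where
  "convex_subgraph H G \<longleftrightarrow> subgraph H G \<and>
     (\<forall>u\<in>verts H. \<forall>v\<in>verts H. \<forall>xs. shortest_path G u v xs \<longrightarrow>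
        set xs \<subseteq> verts H \<and> (\<forall>i. Suc i < length xs \<longrightarrow> {xs ! i, xs ! Suc i} \<in> edges H))"

definition is_cycle :: "'a graph \<Rightarrow> 'a list \<Rightarrow> bool" where
  "is_cycle G vs \<longleftrightarrow> length vs \<ge> 3 \<and> distinct vs \<and> set vs \<subseteq> verts G \<and>
     (\<forall>i < length vs. adj G (vs ! i) (vs ! ((Suc i) mod length vs)))"

definition cycle_graph :: "'a list \<Rightarrow> 'a graph" where
  "cycle_graph vs = \<lparr> verts = set vs,
     edges = {{vs ! i, vs ! ((Suc i) mod length vs)} | i. i < length vs} \<rparr>"

definition convex_cycle :: "'a graph \<Rightarrow> 'a list \<Rightarrow> bool" where
  "convex_cycle G vs \<longleftrightarrow> is_cycle G vs \<and> convex_subgraph (cycle_graph vs) G"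

definition Theta :: "'a graph \<Rightarrow> 'a \<Rightarrow> 'a \<Rightarrow> 'a \<Rightarrow> 'a \<Rightarrow> bool" where
  "Theta G u v x y \<longleftrightarrow>
     gdist G u x + gdist G v y \<noteq> gdist G u y + gdist G v x"

definition Theta_class :: "'a graph \<Rightarrow> 'a \<Rightarrow> 'a \<Rightarrow> 'a set set" where
  "Theta_class G u v = {{x, y} | x y. adj G x y \<and> Theta G u v x y}"

definition Fv :: "'a graph \<Rightarrow> 'a \<Rightarrow> 'a set set set" where
  "Fv G v = {Theta_class G v w | w. adj G v w}"

definition type_I :: "'a graph \<Rightarrow> 'a list \<Rightarrow> bool" where
  "type_I G P \<longleftrightarrow> (let l = length P - 1 in
     Fv G (P ! 0) - Fv G (P ! 1) \<noteq> {} \<and>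
     Fv G (P ! l) - Fv G (P ! (l - 1)) \<noteq> {} \<and>
     (\<forall>i. 1 \<le> i \<and> i \<le> l - 1 \<longrightarrow>
        Theta_class G (P ! i) (P ! (i + 1)) \<notin> Fv G (P ! (i - 1)) \<and>
        Theta_class G (P ! (i - 1)) (P ! i) \<notin> Fv G (P ! (i + 1))))"

end

theory Submission
  imports Defs
begin

text \<open>A partial cube is a graph whose vertices carry finite label sets such that the distance of two
  vertices is the size of the symmetric difference of their labels; each edge flips one coordinate,
  and two edges are in relation Theta exactly when they flip the same coordinate. If the path P
  were not geodesic, some coordinate would be flipped twice along it; take a repetition of minimal
  span. The segment between the two flips is a chain of distinct coordinate flips, and the type-I
  condition implies that no interior corner of this chain closes up to a square. An induction
  on the length of such chains, which uses only that the label sets form an isometric family, shows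
  that either every vertex of the subcube spanned by the chain coordinates lies on the chain, or
  that subcube contains an isometric cycle of length 2m \<ge> 6, which is then a convex cycle.
  The first alternative fails for the next vertex of P, which flips the first chain coordinate back;
  the second contradicts the assumption that all convex cycles are 4-cycles.\<close>

section \<open>Symmetric difference and coordinate flips\<close>

text \<open>A constant rather than the library abbreviation sym_diff, so that the simplifier does not
  unfold it.\<close>
definition symdiff :: "'b set \<Rightarrow> 'b set \<Rightarrow> 'b set" where
  "symdiff A B = (A - B) \<union> (B - A)"

lemma mem_symdiff [simp]: "x \<in> symdiff A B \<longleftrightarrow> (x \<in> A) \<noteq> (x \<in> B)"
  unfolding symdiff_def by auto

lemma symdiff_commute: "symdiff A B = symdiff B A"
  by auto

lemma symdiff_cancel_left: "symdiff (symdiff u A) (symdiff u B) = symdiff A B"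
  by auto

lemma symdiff_symdiff_right: "symdiff u (symdiff w u) = w"
  by auto

lemma symdiff_self [simp]: "symdiff A A = {}"
  by auto

lemma symdiff_empty [simp]: "symdiff A {} = A" "symdiff {} A = A"
  by auto

lemma symdiff_right_commute: "symdiff (symdiff u A) B = symdiff (symdiff u B) A"
  by auto

lemma symdiff_insert: "a \<notin> X \<Longrightarrow> symdiff u (insert a X) = symdiff (symdiff u X) {a}"
  by auto

lemma finite_symdiff [simp]: "finite A \<Longrightarrow> finite B \<Longrightarrow> finite (symdiff A B)"
  unfolding symdiff_def by auto

lemma card_symdiff_singleton:
  assumes "finite D"
  shows "card (symdiff D {e}) = (if e \<in> D then card D - 1 else Suc (card D))"
proof (cases "e \<in> D")
  case True
  then have "symdiff D {e} = D - {e}" by auto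
  then show ?thesis using True assms by simp
next
  case False
  then have "symdiff D {e} = insert e D" by auto
  then show ?thesis using False assms by simp
qed

lemma card_symdiff_triangle:
  assumes "finite A" "finite B" "finite C"
  shows "card (symdiff A C) \<le> card (symdiff A B) + card (symdiff B C)"
proof -
  have "symdiff A C \<subseteq> symdiff A B \<union> symdiff B C" by auto
  then have "card (symdiff A C) \<le> card (symdiff A B \<union> symdiff B C)"
    by (intro card_mono) (use assms in auto)
  also have "\<dots> \<le> card (symdiff A B) + card (symdiff B C)" by (rule card_Un_le)
  finally show ?thesis .
qed

lemma symdiff_between_subset:
  assumes "finite A" "finite B" "finite N"
    and "card (symdiff A N) + card (symdiff N B) \<le> card (symdiff A B)"
  shows "symdiff N u \<subseteq> symdiff A u \<union> symdiff B u"
proof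
  fix z assume z: "z \<in> symdiff N u"
  show "z \<in> symdiff A u \<union> symdiff B u"
  proof (rule ccontr)
    assume "z \<notin> symdiff A u \<union> symdiff B u"
    then have "z \<in> symdiff A N \<inter> symdiff N B" using z by auto
    then have "card (symdiff A N \<inter> symdiff N B) > 0" using assms by (auto simp: card_gt_0_iff)
    moreover have "card (symdiff A B) \<le> card (symdiff A N \<union> symdiff N B)"
      by (rule card_mono) (use assms in auto)
    moreover have "card (symdiff A N) + card (symdiff N B)
        = card (symdiff A N \<union> symdiff N B) + card (symdiff A N \<inter> symdiff N B)"
      by (rule card_Un_Int) (use assms in auto)
    ultimately show False using assms(4) by linarith
  qed
qed

lemma two_le_card: "finite X \<Longrightarrow> a \<in> X \<Longrightarrow> b \<in> X \<Longrightarrow> a \<noteq> b \<Longrightarrow> 2 \<le> card X"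
  by (metis card_2_iff card_mono empty_subsetI insert_subset)

lemma card_symdiff_image:
  assumes "inj_on s {..<m}" "A \<subseteq> {..<m}" "B \<subseteq> {..<m}"
  shows "card (symdiff (s ` A) (s ` B)) = card (symdiff A B)"
proof -
  have "symdiff (s ` A) (s ` B) = s ` symdiff A B"
    using assms unfolding symdiff_def inj_on_def by blast
  moreover have "inj_on s (symdiff A B)"
    using assms(1) by (rule inj_on_subset) (use assms(2,3) in auto)
  ultimately show ?thesis by (simp add: card_image)
qed

text \<open>For s injective on {..<m}, the sets flip_prefix u s t (t \<le> m) followed by
  flip_suffix u s m j (0 < j < m) run around an isometric 2m-cycle of the cube spanned by the
  coordinates s ` {..<m}.\<close>
definition flip_prefix :: "'b set \<Rightarrow> (nat \<Rightarrow> 'b) \<Rightarrow> nat \<Rightarrow> 'b set" where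
  "flip_prefix u s t = symdiff u (s ` {..<t})"

definition flip_suffix :: "'b set \<Rightarrow> (nat \<Rightarrow> 'b) \<Rightarrow> nat \<Rightarrow> nat \<Rightarrow> 'b set" where
  "flip_suffix u s m j = symdiff u (s ` {j..<m})"

lemma flip_prefix_0 [simp]: "flip_prefix u s 0 = u"
  unfolding flip_prefix_def by simp

lemma symdiff_flip_prefix: "symdiff (flip_prefix u s t) u = s ` {..<t}"
  unfolding flip_prefix_def by auto

lemma symdiff_flip_suffix: "symdiff (flip_suffix u s m j) u = s ` {j..<m}"
  unfolding flip_suffix_def by auto

lemma card_symdiff_flip_prefix:
  assumes "inj_on s {..<m}" "i \<le> m" "j \<le> m"
  shows "card (symdiff (flip_prefix u s i) (flip_prefix u s j)) = (if i \<le> j then j - i else i - j)"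
proof -
  have "card (symdiff (flip_prefix u s i) (flip_prefix u s j)) = card (symdiff {..<i} {..<j})"
    unfolding flip_prefix_def symdiff_cancel_left
    by (rule card_symdiff_image[OF assms(1)]) (use assms in auto)
  also have "symdiff {..<i} {..<j} = {min i j..<max i j}" by auto
  finally show ?thesis by auto
qed

lemma card_symdiff_flip_suffix:
  assumes "inj_on s {..<m}" "i \<le> m" "j \<le> m"
  shows "card (symdiff (flip_suffix u s m i) (flip_suffix u s m j)) = (if i \<le> j then j - i else i - j)"
proof -
  have "card (symdiff (flip_suffix u s m i) (flip_suffix u s m j)) = card (symdiff {i..<m} {j..<m})"
    unfolding flip_suffix_def symdiff_cancel_left
    by (rule card_symdiff_image[OF assms(1)]) (use assms in auto)
  also have "symdiff {i..<m} {j..<m} = {min i j..<max i j}" using assms by auto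
  finally show ?thesis by auto
qed

lemma card_symdiff_flip_suffix_base:
  assumes "inj_on s {..<m}" "j \<le> m"
  shows "card (symdiff (flip_suffix u s m j) u) = m - j"
proof -
  have "inj_on s {j..<m}" using assms(1) by (rule inj_on_subset) auto
  then show ?thesis unfolding symdiff_flip_suffix by (simp add: card_image)
qed

lemma card_symdiff_flip_suffix_prefix:
  assumes "inj_on s {..<m}" "r \<le> m" "j \<le> m"
  shows "card (symdiff (flip_suffix u s m j) (flip_prefix u s r)) = card (symdiff {j..<m} {..<r})"
  unfolding flip_prefix_def flip_suffix_def symdiff_cancel_left
  by (rule card_symdiff_image[OF assms(1)]) (use assms in auto)

lemma card_symdiff_flip_suffix_top:
  assumes "inj_on s {..<m}" "j \<le> m"
  shows "card (symdiff (flip_suffix u s m j) (flip_prefix u s m)) = j"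
proof -
  have "symdiff {j..<m} {..<m} = {..<j}" using assms(2) by auto
  then show ?thesis using card_symdiff_flip_suffix_prefix[OF assms(1) order.refl assms(2)] by simp
qed

lemma two_le_card_symdiff_flip_suffix_prefix:
  assumes "inj_on s {..<m}" "1 \<le> r" "r < m" "1 \<le> j" "j < m"
  shows "2 \<le> card (symdiff (flip_suffix u s m j) (flip_prefix u s r))"
proof -
  have "2 \<le> card (symdiff {j..<m} {..<r})" using assms by (intro two_le_card[of _ 0 "m - 1"]) auto
  then show ?thesis using card_symdiff_flip_suffix_prefix[OF assms(1), of r j u] assms by simp
qed

lemma flip_prefix_Suc:
  assumes "inj_on s {..<m}" "t < m"
  shows "flip_prefix u s (Suc t) = symdiff (flip_prefix u s t) {s t}"
proof -
  have "s t \<notin> s ` {..<t}" using assms by (subst inj_on_image_mem_iff[OF assms(1)]) auto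
  then show ?thesis unfolding flip_prefix_def lessThan_Suc image_insert by (rule symdiff_insert)
qed

lemma flip_prefix_shift:
  assumes "inj_on s {..<m}" "t < m"
  shows "flip_prefix (flip_prefix u s 1) (s \<circ> Suc) t = flip_prefix u s (Suc t)"
proof -
  let ?Y = "(s \<circ> Suc) ` {..<t}"
  have "s 0 \<notin> s ` Suc ` {..<t}" using assms by (subst inj_on_image_mem_iff[OF assms(1)]) auto
  then have Y: "s 0 \<notin> ?Y" by (simp add: image_comp)
  have "symdiff u (insert (s 0) ?Y) = symdiff (symdiff u {s 0}) ?Y"
    using symdiff_insert[OF Y, of u] symdiff_right_commute[of u ?Y "{s 0}"] by (rule trans)
  moreover have "s ` {..<Suc t} = insert (s 0) ?Y"
    by (simp add: lessThan_Suc_eq_insert_0 image_image)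
  moreover have "s ` {..<1} = {s 0}" by auto
  ultimately show ?thesis unfolding flip_prefix_def by simp
qed

section \<open>Squarefree chains in isometric set families\<close>

definition isometric_family :: "'b set set \<Rightarrow> bool" where
  "isometric_family V \<longleftrightarrow> (\<forall>w\<in>V. finite w) \<and>
     (\<forall>a\<in>V. \<forall>b\<in>V. a \<noteq> b \<longrightarrow>
        (\<exists>n\<in>V. card (symdiff a n) = 1 \<and> Suc (card (symdiff n b)) = card (symdiff a b)))"

text \<open>symdiff (flip_prefix u s (t - 1)) {s t} is the fourth vertex of the square through the chain
  vertices t - 1, t, t + 1.\<close>
definition squarefree_chain :: "'b set set \<Rightarrow> 'b set \<Rightarrow> (nat \<Rightarrow> 'b) \<Rightarrow> nat \<Rightarrow> bool" where
  "squarefree_chain V u s m \<longleftrightarrow> inj_on s {..<m} \<and> (\<forall>t\<le>m. flip_prefix u s t \<in> V) \<and>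
     (\<forall>t. 1 \<le> t \<and> t < m \<longrightarrow> symdiff (flip_prefix u s (t - 1)) {s t} \<notin> V)"

definition box_cycle :: "'b set set \<Rightarrow> 'b set \<Rightarrow> (nat \<Rightarrow> 'b) \<Rightarrow> nat \<Rightarrow> bool" where
  "box_cycle V u s m \<longleftrightarrow> 3 \<le> m \<and> inj_on s {..<m} \<and> (\<forall>t\<le>m. flip_prefix u s t \<in> V) \<and>
     (\<forall>j. 1 \<le> j \<and> j < m \<longrightarrow> flip_suffix u s m j \<in> V) \<and>
     (\<forall>w\<in>V. symdiff w u \<subseteq> s ` {..<m} \<longrightarrow>
        (\<exists>t\<le>m. w = flip_prefix u s t) \<or> (\<exists>j. 1 \<le> j \<and> j < m \<and> w = flip_suffix u s m j))"

lemma isometric_family_step_in_box: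
  assumes "isometric_family V" "a \<in> V" "b \<in> V" "n \<in> V"
    and "card (symdiff a n) = 1" "Suc (card (symdiff n b)) = card (symdiff a b)"
    and "symdiff a u \<subseteq> S" "symdiff b u \<subseteq> S"
  shows "symdiff n u \<subseteq> S"
proof -
  have "finite a" "finite b" "finite n" using assms(1-4) unfolding isometric_family_def by auto
  then have "symdiff n u \<subseteq> symdiff a u \<union> symdiff b u"
    by (rule symdiff_between_subset) (use assms(5,6) in simp)
  then show ?thesis using assms(7,8) by blast
qed

text \<open>The induction step of squarefree_chain_box below. The last two assumptions are the
  induction hypotheses for the chain without its first and without its last edge.\<close>
locale chain_box =
  fixes V :: "'b set set" and u :: "'b set" and s :: "nat \<Rightarrow> 'b" and m :: nat
  assumes family: "isometric_family V"
    and chain: "squarefree_chain V u s m"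
    and two_le_m: "2 \<le> m"
    and on_chain_if_first: "\<And>w. w \<in> V \<Longrightarrow> symdiff w u \<subseteq> s ` {..<m} \<Longrightarrow> s 0 \<in> symdiff w u \<Longrightarrow>
        \<exists>t\<le>m. w = flip_prefix u s t"
    and on_chain_if_not_last: "\<And>w. w \<in> V \<Longrightarrow> symdiff w u \<subseteq> s ` {..<m} \<Longrightarrow>
        s (m - 1) \<notin> symdiff w u \<Longrightarrow> \<exists>t\<le>m. w = flip_prefix u s t"
begin

abbreviation B :: "nat \<Rightarrow> 'b set" where "B \<equiv> flip_prefix u s"
abbreviation D :: "nat \<Rightarrow> 'b set" where "D \<equiv> flip_suffix u s m"
abbreviation in_box :: "'b set \<Rightarrow> bool" where "in_box w \<equiv> symdiff w u \<subseteq> s ` {..<m}"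

lemma inj: "inj_on s {..<m}"
  and B_in: "t \<le> m \<Longrightarrow> B t \<in> V"
  and no_corner: "1 \<le> t \<Longrightarrow> t < m \<Longrightarrow> symdiff (B (t - 1)) {s t} \<notin> V"
  using chain unfolding squarefree_chain_def by auto

lemma finite_member: "w \<in> V \<Longrightarrow> finite w"
  using family unfolding isometric_family_def by auto

lemma geodesic_step:
  assumes "a \<in> V" "b \<in> V" "a \<noteq> b"
  obtains n where "n \<in> V" "card (symdiff a n) = 1" "Suc (card (symdiff n b)) = card (symdiff a b)"
  using family assms unfolding isometric_family_def by blast

lemma in_box_B: "t \<le> m \<Longrightarrow> in_box (B t)"
  unfolding symdiff_flip_prefix by auto

lemma in_box_D: "in_box (D j)"
  unfolding symdiff_flip_suffix by auto

lemma neighbour_of_B: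
  assumes t: "1 \<le> t" "t < m" and n: "n \<in> V" "in_box n" "card (symdiff n (B t)) = 1"
  shows "n = B (t - 1) \<or> n = B (Suc t)"
proof -
  have "\<exists>r\<le>m. n = B r"
  proof (cases "s 0 \<in> symdiff n u")
    case True
    then show ?thesis using on_chain_if_first n by blast
  next
    case False
    have "s (m - 1) \<notin> symdiff n u"
    proof
      assume last: "s (m - 1) \<in> symdiff n u"
      have "s (m - 1) \<notin> s ` {..<t}" using t inj by (subst inj_on_image_mem_iff) auto
      then have "s (m - 1) \<in> symdiff n (B t)" using last unfolding flip_prefix_def by auto
      moreover have "s 0 \<in> symdiff n (B t)" using False t unfolding flip_prefix_def by auto
      moreover have "s 0 \<noteq> s (m - 1)" using inj two_le_m by (subst inj_on_eq_iff) auto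
      ultimately have "2 \<le> card (symdiff n (B t))"
        using two_le_card finite_member n(1) B_in t by (metis finite_symdiff less_imp_le)
      then show False using n(3) by simp
    qed
    then show ?thesis using on_chain_if_not_last n by blast
  qed
  then obtain r where r: "r \<le> m" "n = B r" by blast
  then have "(if r \<le> t then t - r else r - t) = 1"
    using card_symdiff_flip_prefix[OF inj r(1), of t u] n(3) t by simp
  then consider "r = t - 1" | "r = Suc t" by (auto split: if_splits)
  then show ?thesis using r(2) by cases simp_all
qed

definition off_chain :: "'b set \<Rightarrow> bool" where
  "off_chain w \<longleftrightarrow> w \<in> V \<and> in_box w \<and> (\<forall>t\<le>m. w \<noteq> B t)"

lemma off_chain_first_last:
  assumes "off_chain w"
  shows "s 0 \<notin> symdiff w u" "s (m - 1) \<in> symdiff w u"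
  using assms on_chain_if_first on_chain_if_not_last unfolding off_chain_def by blast+

text \<open>Walking from B t towards an off-chain w must leave the chain, which forces w to flip s t
  as soon as it flips s (t - 1).\<close>
lemma off_chain_flip_Suc:
  assumes w: "off_chain w" and t: "1 \<le> t" "t < m" "s (t - 1) \<in> symdiff w u"
  shows "s t \<in> symdiff w u"
proof -
  have wV: "w \<in> V" and "in_box w" using w unfolding off_chain_def by auto
  have "B t \<noteq> w" using w t(2) unfolding off_chain_def by (metis less_imp_le)
  obtain n where nV: "n \<in> V" and n1: "card (symdiff (B t) n) = 1"
    and n2: "Suc (card (symdiff n w)) = card (symdiff (B t) w)"
    using geodesic_step[OF B_in wV \<open>B t \<noteq> w\<close>] t by auto
  have "finite (symdiff (B t) w)" using finite_member wV B_in t by simp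
  have closer: "e \<in> symdiff (B t) w" if "n = symdiff (B t) {e}" for e
  proof (rule ccontr)
    assume "e \<notin> symdiff (B t) w"
    moreover have "symdiff n w = symdiff (symdiff (B t) w) {e}" using that by auto
    ultimately have "card (symdiff n w) = Suc (card (symdiff (B t) w))"
      using card_symdiff_singleton[OF \<open>finite (symdiff (B t) w)\<close>, of e] by simp
    then show False using n2 by simp
  qed
  have "in_box n"
    using isometric_family_step_in_box[OF family B_in wV nV n1 n2 in_box_B \<open>in_box w\<close>] t by simp
  moreover have "card (symdiff n (B t)) = 1" using n1 symdiff_commute by metis
  ultimately have "n = B (t - 1) \<or> n = B (Suc t)" using neighbour_of_B t nV by blast
  moreover have "B (t - 1) = symdiff (B t) {s (t - 1)}"
    using flip_prefix_Suc[OF inj, of "t - 1" u] t by auto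
  moreover have "B (Suc t) = symdiff (B t) {s t}" using flip_prefix_Suc[OF inj, of t u] t by simp
  ultimately consider "s (t - 1) \<in> symdiff (B t) w" | "s t \<in> symdiff (B t) w"
    using closer by blast
  then show ?thesis
  proof cases
    case 1
    moreover have "s (t - 1) \<in> symdiff (B t) u" unfolding symdiff_flip_prefix using t by auto
    ultimately show ?thesis using t(3) by auto
  next
    case 2
    moreover have "s t \<notin> symdiff (B t) u"
      unfolding symdiff_flip_prefix using t inj by (subst inj_on_image_mem_iff) auto
    ultimately show ?thesis by auto
  qed
qed

lemma off_chain_eq_flip_suffix:
  assumes w: "off_chain w"
  shows "\<exists>j. 1 \<le> j \<and> j < m \<and> w = D j"
proof -
  note first_last = off_chain_first_last[OF w]
  define j where "j = (LEAST j. s j \<in> symdiff w u)"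
  have "j \<le> m - 1" unfolding j_def by (rule Least_le) (rule first_last(2))
  have "s j \<in> symdiff w u" unfolding j_def by (rule LeastI) (rule first_last(2))
  then have "j \<noteq> 0" using first_last(1) by (metis)
  have below: "s p \<notin> symdiff w u" if "p < j" for p
    using that unfolding j_def by (rule not_less_Least)
  have above: "s (j + k) \<in> symdiff w u" if "j + k < m" for k
    using that
  proof (induction k)
    case 0
    show ?case using \<open>s j \<in> symdiff w u\<close> by simp
  next
    case (Suc k)
    then show ?case using off_chain_flip_Suc[OF w, of "j + Suc k"] \<open>j \<noteq> 0\<close> by simp
  qed
  have "symdiff w u = s ` {j..<m}"
  proof
    show "symdiff w u \<subseteq> s ` {j..<m}"
    proof
      fix z assume z: "z \<in> symdiff w u"
      then obtain p where p: "p < m" "z = s p" using w unfolding off_chain_def by blast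
      then have "\<not> p < j" using below z by blast
      then show "z \<in> s ` {j..<m}" using p by auto
    qed
    show "s ` {j..<m} \<subseteq> symdiff w u"
      using above by (auto simp: le_iff_add)
  qed
  then have "w = D j" unfolding flip_suffix_def by (metis symdiff_symdiff_right)
  then show ?thesis using \<open>j \<noteq> 0\<close> \<open>j \<le> m - 1\<close> two_le_m by (intro exI[of _ j]) auto
qed

lemma neighbour_of_flip_suffix:
  assumes j: "1 \<le> j" "j < m" and n: "n \<in> V" "in_box n" "card (symdiff (D j) n) = 1"
    and "n \<noteq> B 0" "n \<noteq> B m"
  shows "\<exists>j'. 1 \<le> j' \<and> j' < m \<and> n = D j'"
proof (rule off_chain_eq_flip_suffix)
  have "n \<noteq> B r" if "r \<le> m" for r
  proof (cases "r = 0 \<or> r = m")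
    case False
    then have "2 \<le> card (symdiff (D j) (B r))"
      using two_le_card_symdiff_flip_suffix_prefix[OF inj, of r j u] that j by auto
    then show ?thesis using n(3) by auto
  qed (use assms in auto)
  then show "off_chain n" unfolding off_chain_def using n by blast
qed

lemma flip_suffix_pred_in:
  assumes j: "2 \<le> j" "j < m" and D: "D j \<in> V"
  shows "D (j - 1) \<in> V"
proof -
  have dist: "card (symdiff (D j) (B m)) = j" using card_symdiff_flip_suffix_top[OF inj] j by simp
  then have "D j \<noteq> B m" using j by auto
  then obtain n where nV: "n \<in> V" and n1: "card (symdiff (D j) n) = 1"
    and n2: "Suc (card (symdiff n (B m))) = card (symdiff (D j) (B m))"
    by (rule geodesic_step[OF D B_in[OF order.refl]])
  have "in_box n" by (rule isometric_family_step_in_box[OF family D B_in nV n1 n2 in_box_D in_box_B]) simp_all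
  moreover have "n \<noteq> B 0" using n2 dist card_symdiff_flip_prefix[OF inj, of 0 m u] j by auto
  moreover have "n \<noteq> B m" using n2 dist j by auto
  ultimately obtain j' where j': "1 \<le> j'" "j' < m" "n = D j'"
    using neighbour_of_flip_suffix[OF _ _ nV _ n1] j by (metis order.trans one_le_numeral)
  then have "j' = j - 1" using n2 dist card_symdiff_flip_suffix_top[OF inj, of j' u] by simp
  then show ?thesis using nV j' by simp
qed

lemma flip_suffix_Suc_in:
  assumes j: "1 \<le> j" "Suc j < m" and D: "D j \<in> V"
  shows "D (Suc j) \<in> V"
proof -
  have dist: "card (symdiff (D j) (B 0)) = m - j" using card_symdiff_flip_suffix_base[OF inj] j by simp
  then have "D j \<noteq> B 0" using j by auto
  then obtain n where nV: "n \<in> V" and n1: "card (symdiff (D j) n) = 1"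
    and n2: "Suc (card (symdiff n (B 0))) = card (symdiff (D j) (B 0))"
    by (rule geodesic_step[OF D B_in[OF le0]])
  have "in_box n" by (rule isometric_family_step_in_box[OF family D B_in nV n1 n2 in_box_D in_box_B]) simp_all
  moreover have "n \<noteq> B 0" using n2 dist j by auto
  moreover have "n \<noteq> B m" using n2 dist card_symdiff_flip_prefix[OF inj, of m 0 u] j by auto
  ultimately obtain j' where j': "1 \<le> j'" "j' < m" "n = D j'"
    using neighbour_of_flip_suffix[OF _ _ nV _ n1] j by auto
  then have "j' = Suc j" using n2 dist card_symdiff_flip_suffix_base[OF inj, of j' u] by simp
  then show ?thesis using nV j' by simp
qed

lemma box_cycle_if_off_chain:
  assumes "off_chain x"
  shows "box_cycle V u s m"
proof -
  obtain j0 where j0: "1 \<le> j0" "j0 < m" "x = D j0" using off_chain_eq_flip_suffix[OF assms] by blast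
  have "D j0 \<in> V" using assms j0 unfolding off_chain_def by simp
  have D_in: "D j \<in> V" if j: "1 \<le> j" "j < m" for j
  proof (cases "j \<le> j0")
    case True
    then show ?thesis
    proof (induction j rule: inc_induct)
      case (step n)
      then show ?case using flip_suffix_pred_in[of "Suc n"] j j0 by simp
    qed (fact \<open>D j0 \<in> V\<close>)
  next
    case False
    then have "j0 \<le> j" by simp
    then show ?thesis
    proof (induction j rule: dec_induct)
      case (step n)
      then show ?case using flip_suffix_Suc_in[of n] j j0 by simp
    qed (fact \<open>D j0 \<in> V\<close>)
  qed
  have "m \<noteq> 2"
  proof
    assume "m = 2"
    then have "{1..<m} = {1}" by auto
    then have "D 1 = symdiff (B 0) {s 1}" unfolding flip_suffix_def by simp
    then show False using no_corner[of 1] D_in[of 1] \<open>m = 2\<close> by simp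
  qed
  then have "3 \<le> m" using two_le_m by simp
  moreover have "(\<exists>t\<le>m. w = B t) \<or> (\<exists>j. 1 \<le> j \<and> j < m \<and> w = D j)" if "w \<in> V" "in_box w" for w
    using off_chain_eq_flip_suffix that unfolding off_chain_def by blast
  ultimately show ?thesis unfolding box_cycle_def using inj B_in D_in by blast
qed

end

lemma squarefree_chain_shift:
  assumes "squarefree_chain V u s m" "0 < m"
  shows "squarefree_chain V (flip_prefix u s 1) (s \<circ> Suc) (m - 1)"
proof -
  have inj: "inj_on s {..<m}" and B_in: "\<And>t. t \<le> m \<Longrightarrow> flip_prefix u s t \<in> V"
    and no_corner: "\<And>t. 1 \<le> t \<Longrightarrow> t < m \<Longrightarrow> symdiff (flip_prefix u s (t - 1)) {s t} \<notin> V"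
    using assms(1) unfolding squarefree_chain_def by auto
  have shift: "flip_prefix (flip_prefix u s 1) (s \<circ> Suc) t = flip_prefix u s (Suc t)" if "t < m" for t
    by (rule flip_prefix_shift[OF inj that])
  have "inj_on (s \<circ> Suc) {..<m - 1}"
    using inj by (rule comp_inj_on[OF _ inj_on_subset, rotated]) (auto simp: inj_on_def)
  moreover have "flip_prefix (flip_prefix u s 1) (s \<circ> Suc) t \<in> V" if "t \<le> m - 1" for t
    using that shift[of t] B_in[of "Suc t"] assms(2) by simp
  moreover have "symdiff (flip_prefix (flip_prefix u s 1) (s \<circ> Suc) (t - 1)) {(s \<circ> Suc) t} \<notin> V"
    if "1 \<le> t" "t < m - 1" for t
    using that shift[of "t - 1"] no_corner[of "Suc t"] by simp
  ultimately show ?thesis unfolding squarefree_chain_def by blast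
qed

lemma squarefree_chain_butlast:
  assumes "squarefree_chain V u s m"
  shows "squarefree_chain V u s (m - 1)"
proof -
  have "inj_on s {..<m}" "\<forall>t\<le>m. flip_prefix u s t \<in> V"
    and "\<forall>t. 1 \<le> t \<and> t < m \<longrightarrow> symdiff (flip_prefix u s (t - 1)) {s t} \<notin> V"
    using assms unfolding squarefree_chain_def by auto
  moreover have "inj_on s {..<m - 1}" using calculation(1) by (rule inj_on_subset) auto
  ultimately show ?thesis unfolding squarefree_chain_def by auto
qed

lemma symdiff_flip_prefix_1_subset:
  assumes "symdiff w u \<subseteq> s ` {..<m}" "s 0 \<in> symdiff w u"
  shows "symdiff w (flip_prefix u s 1) \<subseteq> (s \<circ> Suc) ` {..<m - 1}"
proof
  fix z assume z: "z \<in> symdiff w (flip_prefix u s 1)"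
  have "flip_prefix u s 1 = symdiff u {s 0}" unfolding flip_prefix_def by auto
  then have "z \<noteq> s 0" "z \<in> symdiff w u" using assms(2) z by auto
  have "z \<in> s ` {..<m}" using assms(1) \<open>z \<in> symdiff w u\<close> by (rule subsetD)
  then obtain p where p: "p < m" "z = s p" by auto
  then have "p \<noteq> 0" using \<open>z \<noteq> s 0\<close> by metis
  then have "z = (s \<circ> Suc) (p - 1)" "p - 1 < m - 1" using p by auto
  then show "z \<in> (s \<circ> Suc) ` {..<m - 1}" by blast
qed

lemma on_chain_if_on_shifted_chain:
  assumes inj: "inj_on s {..<m}" and "0 < m"
    and shifted: "\<forall>w\<in>V. symdiff w (flip_prefix u s 1) \<subseteq> (s \<circ> Suc) ` {..<m - 1} \<longrightarrow>
        (\<exists>t\<le>m - 1. w = flip_prefix (flip_prefix u s 1) (s \<circ> Suc) t)"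
    and w: "w \<in> V" "symdiff w u \<subseteq> s ` {..<m}" "s 0 \<in> symdiff w u"
  shows "\<exists>t\<le>m. w = flip_prefix u s t"
proof -
  obtain t where "t \<le> m - 1" "w = flip_prefix (flip_prefix u s 1) (s \<circ> Suc) t"
    using symdiff_flip_prefix_1_subset[OF w(2,3)] shifted w(1) by blast
  then show ?thesis using flip_prefix_shift[OF inj, of t u] \<open>0 < m\<close>
    by (intro exI[of _ "Suc t"]) auto
qed

lemma on_chain_if_on_truncated_chain:
  assumes truncated: "\<forall>w\<in>V. symdiff w u \<subseteq> s ` {..<m - 1} \<longrightarrow> (\<exists>t\<le>m - 1. w = flip_prefix u s t)"
    and w: "w \<in> V" "symdiff w u \<subseteq> s ` {..<m}" "s (m - 1) \<notin> symdiff w u"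
  shows "\<exists>t\<le>m. w = flip_prefix u s t"
proof -
  have "symdiff w u \<subseteq> s ` {..<m - 1}"
  proof
    fix z assume z: "z \<in> symdiff w u"
    then obtain p where "p < m" "z = s p" using w(2) by blast
    then show "z \<in> s ` {..<m - 1}" using w(3) z by (cases "p = m - 1") auto
  qed
  then obtain t where "t \<le> m - 1" "w = flip_prefix u s t" using truncated w(1) by blast
  then show ?thesis by (intro exI[of _ t]) auto
qed

theorem squarefree_chain_box:
  assumes family: "isometric_family V" and "squarefree_chain V u s m"
  shows "(\<forall>w\<in>V. symdiff w u \<subseteq> s ` {..<m} \<longrightarrow> (\<exists>t\<le>m. w = flip_prefix u s t))
    \<or> (\<exists>u s m. box_cycle V u s m)"
  using assms(2)
proof (induction m arbitrary: u s rule: less_induct)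
  case (less m u s)
  show ?case
  proof (rule disjCI)
    assume no_cycle: "\<not> (\<exists>u s m. box_cycle V u s m)"
    show "\<forall>w\<in>V. symdiff w u \<subseteq> s ` {..<m} \<longrightarrow> (\<exists>t\<le>m. w = flip_prefix u s t)"
    proof (cases "m = 0")
      case True
      then show ?thesis by (auto simp: flip_prefix_def intro!: exI[of _ 0])
    next
      case False
      have inj: "inj_on s {..<m}" using less.prems unfolding squarefree_chain_def by blast
      have "\<forall>w\<in>V. symdiff w (flip_prefix u s 1) \<subseteq> (s \<circ> Suc) ` {..<m - 1} \<longrightarrow>
          (\<exists>t\<le>m - 1. w = flip_prefix (flip_prefix u s 1) (s \<circ> Suc) t)"
        using less.IH[OF _ squarefree_chain_shift[OF less.prems]] False no_cycle
        by (auto simp: comp_def)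
      note first = on_chain_if_on_shifted_chain[OF inj _ this]
      have "\<forall>w\<in>V. symdiff w u \<subseteq> s ` {..<m - 1} \<longrightarrow> (\<exists>t\<le>m - 1. w = flip_prefix u s t)"
        using less.IH[OF _ squarefree_chain_butlast[OF less.prems]] False no_cycle by auto
      note not_last = on_chain_if_on_truncated_chain[OF this]
      show ?thesis
      proof (rule ccontr)
        assume "\<not> ?thesis"
        then obtain x where x: "x \<in> V" "symdiff x u \<subseteq> s ` {..<m}"
          and off: "\<forall>t\<le>m. x \<noteq> flip_prefix u s t" by blast
        have "m \<noteq> 1" using first[OF _ x] not_last[OF x] off False
          by (cases "s 0 \<in> symdiff x u") auto
        then interpret chain_box V u s m
          using family less.prems first not_last False by unfold_locales auto
        have "off_chain x" unfolding off_chain_def using x off by blast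
        then show False using box_cycle_if_off_chain no_cycle by blast
      qed
    qed
  qed
qed

section \<open>Walks, distances and hypercubes\<close>

lemma adj_in_verts: "wf_graph G \<Longrightarrow> adj G a b \<Longrightarrow> a \<in> verts G \<and> b \<in> verts G"
  unfolding wf_graph_def adj_def by (auto simp: doubleton_eq_iff)

lemma walk_pair: "u \<in> verts G \<Longrightarrow> v \<in> verts G \<Longrightarrow> adj G u v \<Longrightarrow> walk G [u, v]"
  unfolding walk_def by (auto simp: less_Suc_eq)

lemma walk_map:
  assumes "walk G xs"
    and "\<And>a b. a \<in> verts G \<Longrightarrow> b \<in> verts G \<Longrightarrow> adj G a b \<Longrightarrow> adj G' (h a) (h b)"
    and "\<And>a. a \<in> verts G \<Longrightarrow> h a \<in> verts G'"
  shows "walk G' (map h xs)"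
  unfolding walk_def
proof (intro conjI allI impI)
  show "map h xs \<noteq> []" "set (map h xs) \<subseteq> verts G'" using assms unfolding walk_def by auto
  fix i assume "Suc i < length (map h xs)"
  then show "adj G' (map h xs ! i) (map h xs ! Suc i)"
    using assms unfolding walk_def by (simp add: subset_code(1))
qed

lemma walk_snoc:
  assumes "walk G xs" "adj G (last xs) y" "y \<in> verts G"
  shows "walk G (xs @ [y])"
  unfolding walk_def
proof (intro conjI allI impI)
  show "xs @ [y] \<noteq> []" "set (xs @ [y]) \<subseteq> verts G" using assms unfolding walk_def by auto
  fix i assume i: "Suc i < length (xs @ [y])"
  show "adj G ((xs @ [y]) ! i) ((xs @ [y]) ! Suc i)"
  proof (cases "Suc i < length xs")
    case True
    then show ?thesis using assms(1) unfolding walk_def by (simp add: nth_append)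
  next
    case False
    then have "i = length xs - 1" "xs \<noteq> []" using i assms(1) unfolding walk_def by auto
    then show ?thesis using assms(2) by (simp add: nth_append last_conv_nth)
  qed
qed

lemma walk_take: "walk G xs \<Longrightarrow> q < length xs \<Longrightarrow> walk G (take (Suc q) xs)"
  unfolding walk_def by (auto dest: in_set_takeD)

lemma walk_drop: "walk G xs \<Longrightarrow> q < length xs \<Longrightarrow> walk G (drop q xs)"
  unfolding walk_def by (auto dest: in_set_dropD simp: add.commute)

lemma gdist_le_length:
  assumes "walk G xs"
  shows "gdist G (hd xs) (last xs) \<le> length xs - 1"
  unfolding gdist_def by (rule Least_le) (use assms in blast)

lemma shortest_walk_exists:
  assumes "walk G xs" "hd xs = u" "last xs = v"
  obtains ys where "walk G ys" "hd ys = u" "last ys = v" "length ys - 1 = gdist G u v"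
proof -
  have "\<exists>n xs. walk G xs \<and> hd xs = u \<and> last xs = v \<and> length xs - 1 = n" using assms by blast
  then have "\<exists>ys. walk G ys \<and> hd ys = u \<and> last ys = v \<and> length ys - 1 = gdist G u v"
    unfolding gdist_def by (rule LeastI_ex)
  then show ?thesis using that by blast
qed

lemma gdist_hom_le:
  assumes "\<And>a b. a \<in> verts G \<Longrightarrow> b \<in> verts G \<Longrightarrow> adj G a b \<Longrightarrow> adj G' (h a) (h b)"
    and "\<And>a. a \<in> verts G \<Longrightarrow> h a \<in> verts G'"
    and "walk G xs" "hd xs = u" "last xs = v"
  shows "gdist G' (h u) (h v) \<le> gdist G u v"
proof -
  obtain ys where ys: "walk G ys" "hd ys = u" "last ys = v" "length ys - 1 = gdist G u v"
    using shortest_walk_exists[OF assms(3-5)] .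
  then have "ys \<noteq> []" unfolding walk_def by simp
  then show ?thesis
    using gdist_le_length[OF walk_map[OF ys(1) assms(1,2)]] ys by (simp add: hd_map last_map)
qed

lemma gdist_split_shortest_walk:
  assumes w: "walk G xs" and shortest: "length xs - 1 = gdist G (hd xs) (last xs)"
    and q: "q < length xs"
  shows "gdist G (hd xs) (xs ! q) + gdist G (xs ! q) (last xs) \<le> gdist G (hd xs) (last xs)"
proof -
  have "xs \<noteq> []" using w unfolding walk_def by simp
  have prefix: "hd (take (Suc q) xs) = hd xs" "last (take (Suc q) xs) = xs ! q"
    "length (take (Suc q) xs) - 1 = q"
    using q by (simp, simp add: take_Suc_conv_app_nth, simp)
  have "gdist G (hd xs) (xs ! q) \<le> q"
    using gdist_le_length[OF walk_take[OF w q], unfolded prefix] .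
  moreover have "gdist G (xs ! q) (last xs) \<le> length xs - 1 - q"
    using gdist_le_length[OF walk_drop[OF w q]] q \<open>xs \<noteq> []\<close> by (simp add: hd_drop_conv_nth)
  ultimately show ?thesis using shortest q by linarith
qed

lemma adj_hypercube_iff:
  "adj (hypercube n) S T \<longleftrightarrow> S \<subseteq> {0..<n} \<and> T \<subseteq> {0..<n} \<and> card (symdiff S T) = 1"
proof
  assume "adj (hypercube n) S T"
  then obtain S' T' where e: "{S, T} = {S', T'}" "S' \<subseteq> {0..<n}" "T' \<subseteq> {0..<n}"
    "card ((S' - T') \<union> (T' - S')) = 1"
    unfolding adj_def hypercube_def by auto
  from e(1) have "(S = S' \<and> T = T') \<or> (S = T' \<and> T = S')" by (auto simp: doubleton_eq_iff)
  then show "S \<subseteq> {0..<n} \<and> T \<subseteq> {0..<n} \<and> card (symdiff S T) = 1"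
    using e unfolding symdiff_def by (auto simp: Un_commute)
next
  assume a: "S \<subseteq> {0..<n} \<and> T \<subseteq> {0..<n} \<and> card (symdiff S T) = 1"
  then have "S \<noteq> T" by auto
  then show "adj (hypercube n) S T"
    using a unfolding adj_def hypercube_def symdiff_def by auto
qed

lemma card_symdiff_le_walk_hypercube:
  "walk (hypercube n) xs \<Longrightarrow> card (symdiff (hd xs) (last xs)) \<le> length xs - 1"
proof (induction xs)
  case (Cons a xs)
  show ?case
  proof (cases "xs = []")
    case False
    have w: "walk (hypercube n) xs" and "adj (hypercube n) a (hd xs)"
      using Cons.prems False unfolding walk_def by (auto simp: hd_conv_nth nth_Cons' split: if_splits)
    then have step: "card (symdiff a (hd xs)) = 1" "a \<subseteq> {0..<n}" "hd xs \<subseteq> {0..<n}"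
      by (auto simp: adj_hypercube_iff)
    have "last xs \<in> set xs" "set xs \<subseteq> Pow {0..<n}"
      using w False unfolding walk_def hypercube_def by simp_all
    then have "last xs \<subseteq> {0..<n}" by blast
    then have "finite a" "finite (hd xs)" "finite (last xs)" using step by (auto intro: finite_subset)
    then have "card (symdiff a (last xs)) \<le> 1 + card (symdiff (hd xs) (last xs))"
      using card_symdiff_triangle step(1) by metis
    moreover have "0 < length xs" using False by simp
    ultimately have "card (symdiff a (last xs)) \<le> length xs" using Cons.IH[OF w] by linarith
    then show ?thesis using False by simp
  qed simp
qed (simp add: walk_def)

lemma hypercube_walk:
  assumes "S \<subseteq> {0..<n}" "D \<subseteq> {0..<n}"
  shows "\<exists>xs. walk (hypercube n) xs \<and> hd xs = S \<and> last xs = symdiff S D \<and> length xs = Suc (card D)"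
proof -
  have "finite D" using assms(2) finite_subset by blast
  then show ?thesis using assms(2)
  proof (induction D rule: finite_induct)
    case empty
    have "walk (hypercube n) [S]" using assms(1) unfolding walk_def hypercube_def by simp
    then show ?case by (intro exI[of _ "[S]"]) simp
  next
    case (insert d D)
    then obtain xs where xs: "walk (hypercube n) xs" "hd xs = S" "last xs = symdiff S D"
      "length xs = Suc (card D)"
      by auto
    let ?T = "symdiff (symdiff S D) {d}"
    have sub: "symdiff S D \<subseteq> {0..<n}" "?T \<subseteq> {0..<n}"
      using assms(1) insert(4) unfolding symdiff_def by blast+
    moreover have "symdiff (symdiff S D) ?T = {d}" by auto
    ultimately have "adj (hypercube n) (last xs) ?T" using xs(3) by (simp add: adj_hypercube_iff)
    moreover have "?T \<in> verts (hypercube n)" using sub(2) by (simp add: hypercube_def)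
    ultimately have "walk (hypercube n) (xs @ [?T])" by (rule walk_snoc[OF xs(1)])
    moreover have "symdiff S (insert d D) = ?T" using insert(2) by auto
    ultimately show ?case using xs insert(1,2)
      by (intro exI[of _ "xs @ [?T]"]) (auto simp: hd_append)
  qed
qed

lemma gdist_hypercube:
  assumes "S \<subseteq> {0..<n}" "T \<subseteq> {0..<n}"
  shows "gdist (hypercube n) S T = card (symdiff S T)"
  unfolding gdist_def
proof (rule Least_equality)
  have "symdiff S T \<subseteq> {0..<n}" "symdiff S (symdiff S T) = T"
    using assms unfolding symdiff_def by blast+
  then show "\<exists>xs. walk (hypercube n) xs \<and> hd xs = S \<and> last xs = T \<and> length xs - 1 = card (symdiff S T)"
    using hypercube_walk[OF assms(1), of "symdiff S T"] by auto
next
  fix y assume "\<exists>xs. walk (hypercube n) xs \<and> hd xs = S \<and> last xs = T \<and> length xs - 1 = y"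
  then show "card (symdiff S T) \<le> y" using card_symdiff_le_walk_hypercube by blast
qed

section \<open>Partial cubes as labelled graphs\<close>

definition cube_labelling :: "'a graph \<Rightarrow> ('a \<Rightarrow> nat set) \<Rightarrow> bool" where
  "cube_labelling G L \<longleftrightarrow> wf_graph G \<and> connected_graph G \<and> inj_on L (verts G) \<and>
     (\<forall>v\<in>verts G. finite (L v)) \<and>
     (\<forall>u\<in>verts G. \<forall>v\<in>verts G. gdist G u v = card (symdiff (L u) (L v)))"

lemma partial_cube_labelling:
  assumes "partial_cube G"
  obtains L where "cube_labelling G L"
proof -
  have wf: "wf_graph G" and con: "connected_graph G" using assms unfolding partial_cube_def by auto
  obtain n H where H: "isometric_subgraph H (hypercube n)" and "isomorphic G H"
    using assms unfolding partial_cube_def by auto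
  then obtain f where bij: "bij_betw f (verts G) (verts H)"
    and fadj: "\<And>u v. u \<in> verts G \<Longrightarrow> v \<in> verts G \<Longrightarrow> adj G u v \<longleftrightarrow> adj H (f u) (f v)"
    unfolding isomorphic_def by auto
  define g where "g = inv_into (verts G) f"
  have fV: "f a \<in> verts H" if "a \<in> verts G" for a
    using bij that by (auto simp: bij_betw_def)
  have gV: "g a \<in> verts G" and fg: "f (g a) = a" if "a \<in> verts H" for a
    using bij that unfolding g_def by (auto simp: bij_betw_def inv_into_into f_inv_into_f)
  have gf: "g (f a) = a" if "a \<in> verts G" for a
    using bij that unfolding g_def by (simp add: bij_betw_def inv_into_f_f)
  have cube: "verts H \<subseteq> Pow {0..<n}"
    using H unfolding isometric_subgraph_def subgraph_def hypercube_def by auto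
  have dist: "gdist G u v = card (symdiff (f u) (f v))" if uv: "u \<in> verts G" "v \<in> verts G" for u v
  proof -
    obtain xs where xs: "walk G xs" "hd xs = u" "last xs = v"
      using con uv unfolding connected_graph_def by blast
    have wH: "walk H (map f xs)" by (rule walk_map[OF xs(1)]) (use fadj fV in auto)
    have "gdist H (f u) (f v) \<le> gdist G u v"
      by (rule gdist_hom_le[OF _ _ xs]) (use fadj fV in auto)
    moreover have "gdist G (g (f u)) (g (f v)) \<le> gdist H (f u) (f v)"
    proof (rule gdist_hom_le[OF _ _ wH])
      show "adj G (g a) (g b)" if "a \<in> verts H" "b \<in> verts H" "adj H a b" for a b
        using that fadj gV fg by metis
      show "g a \<in> verts G" if "a \<in> verts H" for a using that by (rule gV)
      have "xs \<noteq> []" using xs(1) unfolding walk_def by simp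
      then show "hd (map f xs) = f u" "last (map f xs) = f v" using xs by (simp_all add: hd_map last_map)
    qed
    moreover have "gdist H (f u) (f v) = card (symdiff (f u) (f v))"
      using H fV[OF uv(1)] fV[OF uv(2)] cube gdist_hypercube
      unfolding isometric_subgraph_def by (metis PowD subset_iff)
    ultimately show ?thesis using gf uv by simp
  qed
  have "finite (f v)" if "v \<in> verts G" for v
    using fV[OF that] cube by (auto intro: finite_subset)
  then show thesis
    using wf con bij dist by (intro that[of f]) (auto simp: cube_labelling_def bij_betw_def)
qed

context
  fixes G :: "'a graph" and L :: "'a \<Rightarrow> nat set"
  assumes lab: "cube_labelling G L"
begin

lemma labelling_gdist: "u \<in> verts G \<Longrightarrow> v \<in> verts G \<Longrightarrow> gdist G u v = card (symdiff (L u) (L v))"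
  and labelling_finite: "v \<in> verts G \<Longrightarrow> finite (L v)"
  and labelling_inj: "inj_on L (verts G)"
  using lab unfolding cube_labelling_def by auto

lemma labelling_walk_exists:
  assumes "u \<in> verts G" "v \<in> verts G"
  obtains xs where "walk G xs" "hd xs = u" "last xs = v" "length xs - 1 = card (symdiff (L u) (L v))"
proof -
  obtain xs where "walk G xs" "hd xs = u" "last xs = v"
    using lab assms unfolding cube_labelling_def connected_graph_def by blast
  then show thesis using shortest_walk_exists labelling_gdist assms that by metis
qed

lemma labelling_adj_iff:
  "adj G u v \<longleftrightarrow> u \<in> verts G \<and> v \<in> verts G \<and> card (symdiff (L u) (L v)) = 1"
proof
  assume a: "adj G u v"
  have uv: "u \<in> verts G" "v \<in> verts G" using adj_in_verts[OF _ a] lab by (auto simp: cube_labelling_def)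
  have "gdist G u v \<le> 1" using gdist_le_length[OF walk_pair[OF uv a]] by simp
  moreover have "L u \<noteq> L v" using a uv labelling_inj unfolding adj_def by (auto dest: inj_onD)
  then have "card (symdiff (L u) (L v)) \<noteq> 0" using labelling_finite uv by auto
  ultimately show "u \<in> verts G \<and> v \<in> verts G \<and> card (symdiff (L u) (L v)) = 1"
    using labelling_gdist uv by auto
next
  assume a: "u \<in> verts G \<and> v \<in> verts G \<and> card (symdiff (L u) (L v)) = 1"
  then obtain ys where ys: "walk G ys" "hd ys = u" "last ys = v" "length ys - 1 = 1"
    using labelling_walk_exists by metis
  then have "ys \<noteq> []" unfolding walk_def by simp
  then have "length ys = 2" using ys(4) by simp
  then have "adj G (ys ! 0) (ys ! Suc 0)" using ys(1) unfolding walk_def by simp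
  moreover have "ys ! 0 = u" "ys ! Suc 0 = v"
    using ys \<open>ys \<noteq> []\<close> \<open>length ys = 2\<close> by (auto simp: hd_conv_nth last_conv_nth)
  ultimately show "adj G u v" by simp
qed

lemma labelling_isometric_family: "isometric_family (L ` verts G)"
proof -
  have "\<exists>n\<in>L ` verts G. card (symdiff a n) = 1 \<and> Suc (card (symdiff n b)) = card (symdiff a b)"
    if ab: "a \<in> L ` verts G" "b \<in> L ` verts G" "a \<noteq> b" for a b
  proof -
    obtain x y where xy: "x \<in> verts G" "y \<in> verts G" "a = L x" "b = L y" using ab by auto
    obtain ys where ys: "walk G ys" "hd ys = x" "last ys = y"
      and len: "length ys - 1 = card (symdiff a b)"
      using labelling_walk_exists[OF xy(1,2)] xy by metis
    have "card (symdiff a b) \<noteq> 0" using \<open>a \<noteq> b\<close> labelling_finite xy by auto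
    then have "1 < length ys" using len by simp
    define z where "z = ys ! 1"
    have "z \<in> verts G" using ys(1) \<open>1 < length ys\<close> unfolding walk_def z_def by auto
    have "adj G x z" using ys \<open>1 < length ys\<close> unfolding walk_def z_def by (auto simp: hd_conv_nth)
    then have one: "card (symdiff a (L z)) = 1" using labelling_adj_iff xy by auto
    have "gdist G x z + gdist G z y \<le> gdist G x y"
      using gdist_split_shortest_walk[OF ys(1) _ \<open>1 < length ys\<close>] ys len labelling_gdist xy
      unfolding z_def by simp
    then have "Suc (card (symdiff (L z) b)) \<le> card (symdiff a b)"
      using labelling_gdist \<open>z \<in> verts G\<close> xy one by simp
    moreover have "card (symdiff a b) \<le> card (symdiff a (L z)) + card (symdiff (L z) b)"
      by (rule card_symdiff_triangle) (use labelling_finite xy \<open>z \<in> verts G\<close> in auto)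
    ultimately show ?thesis using one \<open>z \<in> verts G\<close> by (intro bexI[of _ "L z"]) auto
  qed
  then show ?thesis unfolding isometric_family_def using labelling_finite by blast
qed

lemma labelling_Theta_iff:
  assumes ab: "adj G a b" and xy: "adj G x y"
  shows "Theta G a b x y \<longleftrightarrow> symdiff (L a) (L b) = symdiff (L x) (L y)"
proof -
  have V: "a \<in> verts G" "b \<in> verts G" "x \<in> verts G" "y \<in> verts G"
    using ab xy labelling_adj_iff by auto
  obtain \<alpha> where \<alpha>: "symdiff (L a) (L b) = {\<alpha>}"
    using ab labelling_adj_iff card_1_singletonE by metis
  obtain \<beta> where \<beta>: "symdiff (L x) (L y) = {\<beta>}"
    using xy labelling_adj_iff card_1_singletonE by metis
  have Lb: "L b = symdiff (L a) {\<alpha>}" and Ly: "L y = symdiff (L x) {\<beta>}"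
    using \<alpha> \<beta> by (metis symdiff_symdiff_right symdiff_commute)+
  define D where "D = symdiff (L a) (L x)"
  have "finite D" unfolding D_def using labelling_finite V by simp
  have "symdiff (L b) (L y) = symdiff (symdiff D {\<alpha>}) {\<beta>}" "symdiff (L a) (L y) = symdiff D {\<beta>}"
    "symdiff (L b) (L x) = symdiff D {\<alpha>}"
    unfolding Lb Ly D_def by auto
  then have dists: "gdist G a x = card D" "gdist G b y = card (symdiff (symdiff D {\<alpha>}) {\<beta>})"
    "gdist G a y = card (symdiff D {\<beta>})" "gdist G b x = card (symdiff D {\<alpha>})"
    using labelling_gdist V unfolding D_def by auto
  show ?thesis
  proof (cases "\<alpha> = \<beta>")
    case True
    then have "symdiff (symdiff D {\<alpha>}) {\<beta>} = D" by auto
    then have "Theta G a b x y" unfolding Theta_def dists using True card_symdiff_singleton[OF \<open>finite D\<close>, of \<alpha>]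
      by (cases "\<alpha> \<in> D") (auto simp: card_gt_0_iff \<open>finite D\<close>)
    then show ?thesis using \<alpha> \<beta> True by simp
  next
    case False
    have "finite (symdiff D {\<alpha>})" using \<open>finite D\<close> by simp
    then have "card (symdiff (symdiff D {\<alpha>}) {\<beta>})
        = (if \<beta> \<in> D then card (symdiff D {\<alpha>}) - 1 else Suc (card (symdiff D {\<alpha>})))"
      using card_symdiff_singleton[of "symdiff D {\<alpha>}" \<beta>] False by simp
    moreover have "1 \<le> card D" if "\<beta> \<in> D \<or> \<alpha> \<in> D"
      using that \<open>finite D\<close> by (auto simp: Suc_le_eq card_gt_0_iff)
    moreover have "2 \<le> card D" if "\<alpha> \<in> D" "\<beta> \<in> D" using two_le_card[OF \<open>finite D\<close> that False] .
    ultimately have "\<not> Theta G a b x y"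
      unfolding Theta_def dists
      using card_symdiff_singleton[OF \<open>finite D\<close>, of \<alpha>] card_symdiff_singleton[OF \<open>finite D\<close>, of \<beta>] False
      by (cases "\<alpha> \<in> D"; cases "\<beta> \<in> D") auto
    then show ?thesis using \<alpha> \<beta> False by simp
  qed
qed

lemma Theta_class_eq_if_same_flip:
  assumes "adj G a b" "adj G a' b'" "symdiff (L a) (L b) = symdiff (L a') (L b')"
  shows "Theta_class G a b = Theta_class G a' b'"
proof -
  have "Theta G a b x y = Theta G a' b' x y" if "adj G x y" for x y
    using labelling_Theta_iff[OF assms(1) that] labelling_Theta_iff[OF assms(2) that] assms(3) by simp
  then show ?thesis unfolding Theta_class_def by blast
qed

lemma shortest_walk_in_box:
  assumes w: "walk G xs" "length xs - 1 = gdist G (hd xs) (last xs)" and q: "q < length xs"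
    and box: "symdiff (L (hd xs)) u \<subseteq> S" "symdiff (L (last xs)) u \<subseteq> S"
  shows "symdiff (L (xs ! q)) u \<subseteq> S"
proof -
  have "xs \<noteq> []" "set xs \<subseteq> verts G" using w(1) unfolding walk_def by auto
  then have V: "hd xs \<in> verts G" "last xs \<in> verts G" "xs ! q \<in> verts G" using q by auto
  have "symdiff (L (xs ! q)) u \<subseteq> symdiff (L (hd xs)) u \<union> symdiff (L (last xs)) u"
    using gdist_split_shortest_walk[OF w q] labelling_gdist[OF V(1,3)] labelling_gdist[OF V(3,2)]
      labelling_gdist[OF V(1,2)]
    by (intro symdiff_between_subset) (auto simp: labelling_finite V)
  then show ?thesis using box by blast
qed

end

section \<open>Convex cycles from box cycles\<close>

lemma subgraph_cycle_graph:
  assumes "is_cycle G vs"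
  shows "subgraph (cycle_graph vs) G"
proof -
  let ?n = "length vs"
  have n: "3 \<le> ?n" and "set vs \<subseteq> verts G"
    and step: "\<And>i. i < ?n \<Longrightarrow> adj G (vs ! i) (vs ! (Suc i mod ?n))"
    using assms unfolding is_cycle_def by auto
  have "vs ! i \<in> set vs" "vs ! (Suc i mod ?n) \<in> set vs" if "i < ?n" for i
  proof -
    have "Suc i mod ?n < ?n" using n by (intro mod_less_divisor) linarith
    then show "vs ! i \<in> set vs" "vs ! (Suc i mod ?n) \<in> set vs" using that by simp_all
  qed
  then have "wf_graph (cycle_graph vs)"
    unfolding wf_graph_def cycle_graph_def using step by (fastforce simp: adj_def)
  moreover have "edges (cycle_graph vs) \<subseteq> edges G"
    unfolding cycle_graph_def using step by (auto simp: adj_def)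
  ultimately show ?thesis
    unfolding subgraph_def cycle_graph_def using \<open>set vs \<subseteq> verts G\<close> by simp
qed

lemma convex_cycleI:
  assumes cyc: "is_cycle G vs"
    and closed: "\<And>a b xs. a \<in> set vs \<Longrightarrow> b \<in> set vs \<Longrightarrow> shortest_path G a b xs \<Longrightarrow> set xs \<subseteq> set vs"
    and chordless: "\<And>i j. i < length vs \<Longrightarrow> j < length vs \<Longrightarrow> adj G (vs ! i) (vs ! j) \<Longrightarrow>
        j = Suc i mod length vs \<or> i = Suc j mod length vs"
  shows "convex_cycle G vs"
proof -
  let ?n = "length vs"
  have edge: "{x, y} \<in> edges (cycle_graph vs)"
    if xy: "x \<in> set vs" "y \<in> set vs" "adj G x y" for x y
  proof -
    obtain i j where ij: "i < ?n" "j < ?n" "x = vs ! i" "y = vs ! j"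
      using xy(1,2) by (metis in_set_conv_nth)
    then consider "j = Suc i mod ?n" | "i = Suc j mod ?n" using chordless xy(3) by blast
    then show ?thesis
    proof cases
      case 1
      then show ?thesis unfolding cycle_graph_def using ij by auto
    next
      case 2
      then have "{x, y} = {vs ! j, vs ! (Suc j mod ?n)}" using ij by auto
      then show ?thesis unfolding cycle_graph_def using ij by auto
    qed
  qed
  have "set xs \<subseteq> verts (cycle_graph vs) \<and>
      (\<forall>i. Suc i < length xs \<longrightarrow> {xs ! i, xs ! Suc i} \<in> edges (cycle_graph vs))"
    if "a \<in> set vs" "b \<in> set vs" "shortest_path G a b xs" for a b xs
  proof -
    have "set xs \<subseteq> set vs" using closed that by blast
    moreover have "walk G xs" using that(3) unfolding shortest_path_def gpath_def by simp
    ultimately show ?thesis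
      using edge unfolding cycle_graph_def walk_def by (auto simp: subset_iff)
  qed
  then show ?thesis using cyc subgraph_cycle_graph[OF cyc]
    unfolding convex_cycle_def convex_subgraph_def by (simp add: cycle_graph_def)
qed

definition cycle_label :: "'b set \<Rightarrow> (nat \<Rightarrow> 'b) \<Rightarrow> nat \<Rightarrow> nat \<Rightarrow> 'b set" where
  "cycle_label u s m k = (if k \<le> m then flip_prefix u s k else flip_suffix u s m (k - m))"

lemma cycle_label_ge: "m \<le> k \<Longrightarrow> cycle_label u s m k = flip_suffix u s m (k - m)"
  unfolding cycle_label_def flip_prefix_def flip_suffix_def by (auto simp: atLeast0LessThan)

lemma symdiff_cycle_label_subset: "symdiff (cycle_label u s m k) u \<subseteq> s ` {..<m}"
  unfolding cycle_label_def by (auto simp: symdiff_flip_prefix symdiff_flip_suffix)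

lemma card_symdiff_cycle_label_cases:
  assumes inj: "inj_on s {..<m}" and ij: "i < j" "j < 2 * m"
  shows "card (symdiff (cycle_label u s m i) (cycle_label u s m j)) = j - i
       \<or> (i = 0 \<and> card (symdiff (cycle_label u s m i) (cycle_label u s m j)) = 2 * m - j)
       \<or> 2 \<le> card (symdiff (cycle_label u s m i) (cycle_label u s m j))"
proof (cases "j \<le> m")
  case True
  then show ?thesis unfolding cycle_label_def using card_symdiff_flip_prefix[OF inj, of i j u] ij by auto
next
  case False
  then have cj: "cycle_label u s m j = flip_suffix u s m (j - m)" by (simp add: cycle_label_ge)
  consider "m \<le> i" | "i = 0" | "0 < i" "i < m" by linarith
  then show ?thesis
  proof cases
    case 1
    then show ?thesis
      using cj cycle_label_ge[OF 1, of u s] card_symdiff_flip_suffix[OF inj, of "i - m" "j - m" u] ij by simp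
  next
    case 2
    then show ?thesis
      using cj card_symdiff_flip_suffix_base[OF inj, of "j - m" u] ij False
      by (simp add: cycle_label_def symdiff_commute mult_2)
  next
    case 3
    then show ?thesis
      using cj two_le_card_symdiff_flip_suffix_prefix[OF inj, of i "j - m" u] ij False
      by (simp add: cycle_label_def symdiff_commute)
  qed
qed

lemma cycle_label_inj:
  assumes "inj_on s {..<m}" "i < 2 * m" "j < 2 * m" "cycle_label u s m i = cycle_label u s m j"
  shows "i = j"
proof (rule ccontr)
  assume "i \<noteq> j"
  then consider "i < j" | "j < i" by linarith
  then show False
    using card_symdiff_cycle_label_cases[OF assms(1), of i j u]
      card_symdiff_cycle_label_cases[OF assms(1), of j i u] assms(2-4) by cases auto
qed

lemma cycle_label_adjacent:
  assumes "inj_on s {..<m}" "i < 2 * m" "j < 2 * m"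
    and "card (symdiff (cycle_label u s m i) (cycle_label u s m j)) = 1"
  shows "j = Suc i mod (2 * m) \<or> i = Suc j mod (2 * m)"
proof -
  have *: "j = Suc i mod (2 * m) \<or> i = Suc j mod (2 * m)"
    if "i < j" "j < 2 * m" "card (symdiff (cycle_label u s m i) (cycle_label u s m j)) = 1" for i j
  proof -
    from card_symdiff_cycle_label_cases[OF assms(1) that(1,2), of u] that(3)
    consider "j = Suc i" | "i = 0" "Suc j = 2 * m" by linarith
    then show ?thesis using that by cases auto
  qed
  have "i \<noteq> j" using assms(4) by auto
  then consider "i < j" | "j < i" by linarith
  then show ?thesis using *[of i j] *[of j i] assms(2-4) by cases (auto simp: symdiff_commute)
qed

lemma card_symdiff_cycle_label_Suc:
  assumes inj: "inj_on s {..<m}" and "3 \<le> m" "k < 2 * m"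
  shows "card (symdiff (cycle_label u s m k) (cycle_label u s m (Suc k mod (2 * m)))) = 1"
proof -
  consider "k < m" | "k = m" | "m < k" "Suc k < 2 * m" | "Suc k = 2 * m" using assms by linarith
  then show ?thesis
  proof cases
    case 1
    then show ?thesis unfolding cycle_label_def using card_symdiff_flip_prefix[OF inj, of k "Suc k" u] by simp
  next
    case 2
    then show ?thesis using card_symdiff_flip_suffix_top[OF inj, of 1 u] assms
      by (simp add: cycle_label_def symdiff_commute mult_2)
  next
    case 3
    then show ?thesis
      using card_symdiff_flip_suffix[OF inj, of "k - m" "Suc k - m" u] by (simp add: cycle_label_ge)
  next
    case 4
    then have "k - m = m - 1" by simp
    then show ?thesis using 4 card_symdiff_flip_suffix_base[OF inj, of "m - 1" u] assms
      by (simp add: cycle_label_ge cycle_label_def)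
  qed
qed

lemma box_cycle_members:
  assumes "box_cycle V u s m"
  shows "w \<in> V \<and> symdiff w u \<subseteq> s ` {..<m} \<longleftrightarrow> (\<exists>k<2 * m. w = cycle_label u s m k)"
proof -
  have m: "3 \<le> m"
    and B_in: "\<And>t. t \<le> m \<Longrightarrow> flip_prefix u s t \<in> V"
    and D_in: "\<And>j. 1 \<le> j \<Longrightarrow> j < m \<Longrightarrow> flip_suffix u s m j \<in> V"
    and box: "w \<in> V \<Longrightarrow> symdiff w u \<subseteq> s ` {..<m} \<Longrightarrow>
        (\<exists>t\<le>m. w = flip_prefix u s t) \<or> (\<exists>j. 1 \<le> j \<and> j < m \<and> w = flip_suffix u s m j)"
    using assms unfolding box_cycle_def by auto
  have to_label: "\<exists>k<2 * m. w = cycle_label u s m k" if "w \<in> V" "symdiff w u \<subseteq> s ` {..<m}"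
    using box[OF that]
  proof (elim disjE exE conjE)
    fix t assume "t \<le> m" "w = flip_prefix u s t"
    then show ?thesis using m unfolding cycle_label_def by (intro exI[of _ t]) auto
  next
    fix j assume "1 \<le> j" "j < m" "w = flip_suffix u s m j"
    then show ?thesis using cycle_label_ge[of m "m + j" u s] by (intro exI[of _ "m + j"]) auto
  qed
  have "cycle_label u s m k \<in> V" if "k < 2 * m" for k
    using that B_in D_in[of "k - m"] unfolding cycle_label_def by auto
  then have "w \<in> V \<and> symdiff w u \<subseteq> s ` {..<m}" if "k < 2 * m" "w = cycle_label u s m k" for k
    using that symdiff_cycle_label_subset[of u s m k] by simp
  then show ?thesis using to_label by blast
qed

lemma box_cycle_convex_cycle:
  assumes lab: "cube_labelling G L" and bc: "box_cycle (L ` verts G) u s m"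
  shows "\<exists>vs. convex_cycle G vs \<and> length vs = 2 * m"
proof -
  have m: "3 \<le> m" and inj: "inj_on s {..<m}" using bc unfolding box_cycle_def by auto
  let ?c = "cycle_label u s m"
  have members: "w \<in> L ` verts G \<and> symdiff w u \<subseteq> s ` {..<m} \<longleftrightarrow> (\<exists>k<2 * m. w = ?c k)" for w
    by (rule box_cycle_members[OF bc])
  have c_in: "?c k \<in> L ` verts G" if "k < 2 * m" for k
    using members[of "?c k"] that by blast
  define vs where "vs = map (\<lambda>k. inv_into (verts G) L (?c k)) [0..<2 * m]"
  have len: "length vs = 2 * m" unfolding vs_def by simp
  have L_vs: "L (vs ! k) = ?c k" "vs ! k \<in> verts G" if "k < 2 * m" for k
    using c_in[OF that] that unfolding vs_def by (auto simp: f_inv_into_f inv_into_into)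
  have adj_vs: "adj G (vs ! i) (vs ! j) \<longleftrightarrow> card (symdiff (?c i) (?c j)) = 1"
    if "i < 2 * m" "j < 2 * m" for i j
    using labelling_adj_iff[OF lab] L_vs that by auto
  have "is_cycle G vs"
    unfolding is_cycle_def len
  proof (intro conjI allI impI)
    show "distinct vs" unfolding distinct_conv_nth len
    proof (intro allI impI)
      fix i j assume "i < 2 * m" "j < 2 * m" "i \<noteq> j"
      then show "vs ! i \<noteq> vs ! j" using L_vs cycle_label_inj[OF inj, of i j u] by metis
    qed
    show "set vs \<subseteq> verts G" using L_vs len by (auto simp: in_set_conv_nth)
    show "adj G (vs ! i) (vs ! (Suc i mod (2 * m)))" if "i < 2 * m" for i
      using adj_vs that card_symdiff_cycle_label_Suc[OF inj m that] m by simp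
  qed (use m in simp)
  moreover have "set xs \<subseteq> set vs"
    if ab: "a \<in> set vs" "b \<in> set vs" and sp: "shortest_path G a b xs" for a b xs
  proof
    fix x assume "x \<in> set xs"
    then obtain q where q: "q < length xs" "x = xs ! q" by (auto simp: in_set_conv_nth)
    have w: "walk G xs" "length xs - 1 = gdist G (hd xs) (last xs)"
      using sp unfolding shortest_path_def gpath_def by auto
    have ends: "symdiff (L (hd xs)) u \<subseteq> s ` {..<m}" "symdiff (L (last xs)) u \<subseteq> s ` {..<m}"
      using sp ab L_vs len symdiff_cycle_label_subset unfolding shortest_path_def
      by (metis in_set_conv_nth)+
    have "x \<in> verts G" using w(1) q unfolding walk_def by auto
    moreover have "symdiff (L x) u \<subseteq> s ` {..<m}"
      using shortest_walk_in_box[OF lab w q(1) ends] q(2) by simp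
    ultimately obtain k where k: "k < 2 * m" "L x = ?c k" using members[of "L x"] by blast
    then have "x = vs ! k" using labelling_inj[OF lab] L_vs \<open>x \<in> verts G\<close> by (metis inj_onD)
    then show "x \<in> set vs" using k len by simp
  qed
  moreover have "j = Suc i mod length vs \<or> i = Suc j mod length vs"
    if "i < length vs" "j < length vs" "adj G (vs ! i) (vs ! j)" for i j
    using cycle_label_adjacent[OF inj] adj_vs that len by simp
  ultimately show ?thesis using convex_cycleI len by blast
qed

lemma no_box_cycle:
  assumes "cube_labelling G L" "\<forall>vs. convex_cycle G vs \<longrightarrow> length vs = 4"
  shows "\<not> box_cycle (L ` verts G) u s m"
proof
  assume bc: "box_cycle (L ` verts G) u s m"
  then have "3 \<le> m" unfolding box_cycle_def by simp
  moreover obtain vs where "convex_cycle G vs" "length vs = 2 * m"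
    using box_cycle_convex_cycle[OF assms(1) bc] by blast
  ultimately show False using assms(2) by auto
qed

section \<open>Type-I paths\<close>

lemma shortest_repetition:
  fixes c :: "nat \<Rightarrow> 'b"
  assumes "\<not> inj_on c {..<l}"
  obtains i d where "0 < d" "i + d < l" "c (i + d) = c i" "inj_on (\<lambda>p. c (i + p)) {..<d}"
proof -
  define R where "R d \<longleftrightarrow> (\<exists>i. 0 < d \<and> i + d < l \<and> c (i + d) = c i)" for d
  obtain a b where "a < l" "b < l" "a \<noteq> b" "c a = c b" using assms unfolding inj_on_def by auto
  then have "R (if a < b then b - a else a - b)" unfolding R_def
    by (cases "a < b") (auto intro!: exI[of _ "min a b"])
  then obtain d where "R d" and least: "\<And>d'. d' < d \<Longrightarrow> \<not> R d'"
    using exists_least_iff[of R] by blast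
  then obtain i where i: "0 < d" "i + d < l" "c (i + d) = c i" unfolding R_def by blast
  have "inj_on (\<lambda>p. c (i + p)) {..<d}"
  proof (rule inj_onI, rule ccontr)
    fix x y assume xy: "x \<in> {..<d}" "y \<in> {..<d}" "c (i + x) = c (i + y)" "x \<noteq> y"
    have "R (max x y - min x y)"
      unfolding R_def using xy i by (intro exI[of _ "i + min x y"] conjI) (auto simp: max_def min_def)
    moreover have "max x y - min x y < d" using xy(1,2) by (auto simp: max_def min_def)
    ultimately show False using least by blast
  qed
  then show thesis using that i by blast
qed

definition flip_coord :: "('a \<Rightarrow> nat set) \<Rightarrow> 'a \<Rightarrow> 'a \<Rightarrow> nat" where
  "flip_coord L x y = (THE e. symdiff (L x) (L y) = {e})"

lemma symdiff_eq_flip_coord: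
  assumes "card (symdiff (L x) (L y)) = 1"
  shows "symdiff (L x) (L y) = {flip_coord L x y}"
proof -
  obtain e where e: "symdiff (L x) (L y) = {e}" using assms card_1_singletonE by blast
  then have "flip_coord L x y = e" unfolding flip_coord_def by auto
  then show ?thesis using e by simp
qed

context
  fixes G :: "'a graph" and L :: "'a \<Rightarrow> nat set" and P :: "'a list"
  assumes lab: "cube_labelling G L" and walk: "walk G P"
begin

definition path_flip :: "nat \<Rightarrow> nat" where
  "path_flip p = flip_coord L (P ! p) (P ! Suc p)"

lemma path_vertex: "p < length P \<Longrightarrow> P ! p \<in> verts G"
  using walk unfolding walk_def by auto

lemma path_label_Suc:
  assumes "Suc p < length P"
  shows "L (P ! Suc p) = symdiff (L (P ! p)) {path_flip p}"
proof -
  have "card (symdiff (L (P ! p)) (L (P ! Suc p))) = 1"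
    using walk assms labelling_adj_iff[OF lab] unfolding walk_def by blast
  then show ?thesis unfolding path_flip_def using symdiff_eq_flip_coord
    by (metis symdiff_commute symdiff_symdiff_right)
qed

lemma path_label_flip_prefix:
  assumes "i + d < length P" "inj_on (\<lambda>p. path_flip (i + p)) {..<d}" "t \<le> d"
  shows "L (P ! (i + t)) = flip_prefix (L (P ! i)) (\<lambda>p. path_flip (i + p)) t"
  using assms(3)
proof (induction t)
  case (Suc t)
  then show ?case
    using path_label_Suc[of "i + t"] flip_prefix_Suc[OF assms(2), of t] assms(1) by simp
qed simp

lemma gdist_path_if_flips_inj:
  assumes "inj_on path_flip {..<length P - 1}"
  shows "gdist G (hd P) (last P) = length P - 1"
proof -
  let ?l = "length P - 1"
  have "P \<noteq> []" using walk unfolding walk_def by simp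
  then have ends: "hd P = P ! 0" "last P = P ! ?l" by (simp_all add: hd_conv_nth last_conv_nth)
  have "L (P ! ?l) = flip_prefix (L (P ! 0)) path_flip ?l"
    using path_label_flip_prefix[of 0 ?l ?l] assms \<open>P \<noteq> []\<close> by simp
  then have "symdiff (L (P ! 0)) (L (P ! ?l)) = path_flip ` {..<?l}"
    unfolding flip_prefix_def by auto
  then show ?thesis
    using labelling_gdist[OF lab] path_vertex \<open>P \<noteq> []\<close> assms ends by (simp add: card_image)
qed

lemma type_I_no_corner:
  assumes "type_I G P" "1 \<le> p" "p < length P - 1"
  shows "symdiff (L (P ! (p - 1))) {path_flip p} \<notin> L ` verts G"
proof
  assume "symdiff (L (P ! (p - 1))) {path_flip p} \<in> L ` verts G"
  then obtain x where x: "x \<in> verts G" "L x = symdiff (L (P ! (p - 1))) {path_flip p}" by auto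
  have corner: "symdiff (L (P ! (p - 1))) (L x) = {path_flip p}" using x(2) by auto
  moreover have "symdiff (L (P ! p)) (L (P ! (p + 1))) = {path_flip p}"
    using path_label_Suc[of p] assms(3) by auto
  ultimately have flip: "symdiff (L (P ! (p - 1))) (L x) = symdiff (L (P ! p)) (L (P ! (p + 1)))"
    by simp
  have "adj G (P ! (p - 1)) x"
    using labelling_adj_iff[OF lab] x(1) path_vertex[of "p - 1"] corner assms(3)
    by auto
  moreover have "adj G (P ! p) (P ! (p + 1))" using walk assms(3) unfolding walk_def by simp
  ultimately have "Theta_class G (P ! (p - 1)) x = Theta_class G (P ! p) (P ! (p + 1))"
    by (rule Theta_class_eq_if_same_flip[OF lab _ _ flip])
  then have "Theta_class G (P ! p) (P ! (p + 1)) \<in> Fv G (P ! (p - 1))"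
    unfolding Fv_def using \<open>adj G (P ! (p - 1)) x\<close> by blast
  moreover have "\<forall>i. 1 \<le> i \<and> i \<le> length P - 1 - 1 \<longrightarrow>
      Theta_class G (P ! i) (P ! (i + 1)) \<notin> Fv G (P ! (i - 1))"
    using assms(1) unfolding type_I_def Let_def by blast
  ultimately show False using assms(2,3) by auto
qed

lemma squarefree_chain_path_segment:
  assumes "type_I G P" "i + d < length P - 1" "inj_on (\<lambda>p. path_flip (i + p)) {..<d}"
  shows "squarefree_chain (L ` verts G) (L (P ! i)) (\<lambda>p. path_flip (i + p)) d"
  unfolding squarefree_chain_def
proof (intro conjI allI impI)
  let ?B = "flip_prefix (L (P ! i)) (\<lambda>p. path_flip (i + p))"
  have B: "?B t = L (P ! (i + t))" if "t \<le> d" for t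
    using path_label_flip_prefix[OF _ assms(3) that] assms(2) by simp
  show "?B t \<in> L ` verts G" if "t \<le> d" for t using B[OF that] path_vertex that assms(2) by simp
  show "symdiff (?B (t - 1)) {path_flip (i + t)} \<notin> L ` verts G" if "1 \<le> t \<and> t < d" for t
  proof -
    have "t - 1 \<le> d" "i + (t - 1) = i + t - 1" using that by auto
    then show ?thesis using B type_I_no_corner[OF assms(1), of "i + t"] that assms(2) by simp
  qed
qed (fact assms(3))

lemma path_flips_inj:
  assumes cycles: "\<forall>vs. convex_cycle G vs \<longrightarrow> length vs = 4" and "distinct P" and "type_I G P"
  shows "inj_on path_flip {..<length P - 1}"
proof (rule ccontr)
  let ?V = "L ` verts G"
  assume "\<not> ?thesis"
  then obtain i d where d: "0 < d" "i + d < length P - 1" "path_flip (i + d) = path_flip i"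
    and inj: "inj_on (\<lambda>p. path_flip (i + p)) {..<d}"
    by (rule shortest_repetition)
  let ?s = "\<lambda>p. path_flip (i + p)" and ?B = "flip_prefix (L (P ! i)) (\<lambda>p. path_flip (i + p))"
  have B: "?B t = L (P ! (i + t))" if "t \<le> d" for t
    using path_label_flip_prefix[OF _ inj that] d by simp
  have "\<forall>w\<in>?V. symdiff w (L (P ! i)) \<subseteq> ?s ` {..<d} \<longrightarrow> (\<exists>t\<le>d. w = ?B t)"
    using squarefree_chain_box[OF labelling_isometric_family[OF lab]
        squarefree_chain_path_segment[OF assms(3) d(2) inj]]
      no_box_cycle[OF lab cycles] by blast
  moreover have succ: "L (P ! (i + d + 1)) = symdiff (?B d) {?s 0}"
    using path_label_Suc[of "i + d"] B[of d] d by simp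
  have "?s 0 \<in> ?s ` {..<d}" using d(1) by blast
  then have "symdiff (L (P ! (i + d + 1))) (L (P ! i)) \<subseteq> ?s ` {..<d}"
    unfolding succ flip_prefix_def by auto
  moreover have "L (P ! (i + d + 1)) \<in> ?V" using path_vertex d by simp
  ultimately obtain t where "t \<le> d" "L (P ! (i + d + 1)) = ?B t" by blast
  then have "L (P ! (i + d + 1)) = L (P ! (i + t))" using B by simp
  moreover have "i + d + 1 < length P" "i + t < length P" using d \<open>t \<le> d\<close> by auto
  ultimately have "P ! (i + d + 1) = P ! (i + t)"
    using inj_onD[OF labelling_inj[OF lab]] path_vertex by blast
  then show False using \<open>distinct P\<close> \<open>t \<le> d\<close> d by (simp add: nth_eq_iff_index_eq)
qed

end

theorem mainTheorem5:
  fixes G :: "'a graph" and P :: "'a list"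
  assumes "partial_cube G"
    and "\<forall>vs. convex_cycle G vs \<longrightarrow> length vs = 4"
    and "gpath G P" and "length P \<ge> 2"
    and "type_I G P"
  shows "shortest_path G (hd P) (last P) P"
proof -
  obtain L where lab: "cube_labelling G L" using partial_cube_labelling[OF assms(1)] .
  have walk: "walk G P" and "distinct P" using assms(3) unfolding gpath_def by auto
  have "inj_on (path_flip L P) {..<length P - 1}"
    using path_flips_inj[OF lab walk assms(2) \<open>distinct P\<close> assms(5)] .
  then have "gdist G (hd P) (last P) = length P - 1"
    by (rule gdist_path_if_flips_inj[OF lab walk])
  then show ?thesis using assms(3) unfolding shortest_path_def by simp
qed

end
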